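(* Let $(X,d)$ be a compact metric space and let $f\colon X\to X$ be a continuous map with the limit shadowing property. Then $CR(f)=\Omega(f)=\overline{M(f)}$, and the restriction $f|_{\Omega(f)}\colon\Omega(f)\to\Omega(f)$ has the shadowing property.
   Context: A sequence $(x_i)_{i\ge0}$ in $X$ is a $\delta$-pseudo orbit of $f$ if $d(f(x_i),x_{i+1})\le\delta$ for all $i\ge0$; it is $\epsilon$-shadowed by $x\in X$ if $d(x_i,f^i(x))\le\epsilon$ for all $i\ge0$. $f$ has the shadowing property if for every $\epsilon>0$ there is $\delta>0$ such that every $\delta$-pseudo orbit of $f$ is $\epsilon$-shadowed by some point of $X$. A sequence $(x_i)_{i\ge0}$ is a limit pseudo orbit of $f$ if $\lim_{i\to\infty}d(f(x_i),x_{i+1})=0$; $f$ has the limit shadowing property if for every limit pseudo orbit $(x_i)_{i\ge0}$ there is $y\in X$ with $\lim_{i\to\infty}d(x_i,f^i(y))=0$. A finite sequence $(x_i)_{i=0}^k$ ($k\ge1$) is a $\delta$-chain if $d(f(x_i),x_{i+1})\le\delta$ for $0\le i\le k-1$, and a $\delta$-cycle if moreover $x_0=x_k$. $x$ is chain recurrent if for every $\delta>0$ there is a $\delta$-cycle with $x_0=x_k=x$; $CR(f)$ is the set of chain recurrent points. $x$ is minimal if $f$ restricted to the orbit closure $\overline{\{f^n(x):n\ge0\}}$ is minimal; $M(f)$ is the set of minimal points. $x$ is non-wandering if for every neighborhood $U$ of $x$ there is $n>0$ with $f^n(U)\cap U\ne\emptyset$; $\Omega(f)$ is the set of non-wandering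 points. *)

theory Defs
  imports "HOL-Analysis.Analysis"
begin

definition pseudo_orbit :: "('a::metric_space \<Rightarrow> 'a) \<Rightarrow> 'a set \<Rightarrow> real \<Rightarrow> (nat \<Rightarrow> 'a) \<Rightarrow> bool" where
  "pseudo_orbit f X \<delta> xs \<longleftrightarrow> (\<forall>i. xs i \<in> X) \<and> (\<forall>i. dist (f (xs i)) (xs (Suc i)) \<le> \<delta>)"

definition shadows :: "('a::metric_space \<Rightarrow> 'a) \<Rightarrow> real \<Rightarrow> (nat \<Rightarrow> 'a) \<Rightarrow> 'a \<Rightarrow> bool" where
  "shadows f \<epsilon> xs x \<longleftrightarrow> (\<forall>i. dist (xs i) ((f ^^ i) x) \<le> \<epsilon>)"

definition shadowing_property :: "('a::metric_space \<Rightarrow> 'a) \<Rightarrow> 'a set \<Rightarrow> bool" where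
  "shadowing_property f X \<longleftrightarrow>
     (\<forall>\<epsilon>>0. \<exists>\<delta>>0. \<forall>xs. pseudo_orbit f X \<delta> xs \<longrightarrow> (\<exists>x\<in>X. shadows f \<epsilon> xs x))"

definition limit_pseudo_orbit :: "('a::metric_space \<Rightarrow> 'a) \<Rightarrow> 'a set \<Rightarrow> (nat \<Rightarrow> 'a) \<Rightarrow> bool" where
  "limit_pseudo_orbit f X xs \<longleftrightarrow>
     (\<forall>i. xs i \<in> X) \<and> (\<lambda>i. dist (f (xs i)) (xs (Suc i))) \<longlonglongrightarrow> 0"

definition limit_shadowing_property :: "('a::metric_space \<Rightarrow> 'a) \<Rightarrow> 'a set \<Rightarrow> bool" where
  "limit_shadowing_property f X \<longleftrightarrow>
     (\<forall>xs. limit_pseudo_orbit f X xs \<longrightarrow>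
        (\<exists>y\<in>X. (\<lambda>i. dist (xs i) ((f ^^ i) y)) \<longlonglongrightarrow> 0))"

definition chain_recurrent_set :: "('a::metric_space \<Rightarrow> 'a) \<Rightarrow> 'a set \<Rightarrow> 'a set" where
  "chain_recurrent_set f X = {x \<in> X. \<forall>\<delta>>0. \<exists>k::nat. k \<ge> 1 \<and> (\<exists>xs. xs 0 = x \<and> xs k = x \<and>
       (\<forall>i\<le>k. xs i \<in> X) \<and> (\<forall>i<k. dist (f (xs i)) (xs (Suc i)) \<le> \<delta>))}"

definition orbit_closure :: "('a::metric_space \<Rightarrow> 'a) \<Rightarrow> 'a \<Rightarrow> 'a set" where
  "orbit_closure f x = closure {(f ^^ n) x | n. True}"

definition minimal_system :: "('a::metric_space \<Rightarrow> 'a) \<Rightarrow> 'a set \<Rightarrow> bool" where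
  "minimal_system f Y \<longleftrightarrow> Y \<noteq> {} \<and> closed Y \<and> f ` Y \<subseteq> Y \<and>
     (\<forall>Z. Z \<subseteq> Y \<and> Z \<noteq> {} \<and> closed Z \<and> f ` Z \<subseteq> Z \<longrightarrow> Z = Y)"

definition minimal_points :: "('a::metric_space \<Rightarrow> 'a) \<Rightarrow> 'a set \<Rightarrow> 'a set" where
  "minimal_points f X = {x \<in> X. minimal_system f (orbit_closure f x)}"

definition nonwandering_set :: "('a::metric_space \<Rightarrow> 'a) \<Rightarrow> 'a set \<Rightarrow> 'a set" where
  "nonwandering_set f X = {x \<in> X. \<forall>U. openin (top_of_set X) U \<and> x \<in> U \<longrightarrow>
       (\<exists>n>0. (f ^^ n) ` U \<inter> U \<noteq> {})}"

end

theory Submission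
  imports Defs
begin

(* Limit shadowing lets one glue finite chains whose jumps tend to zero into a limit pseudo-orbit,
   which some true orbit then traces asymptotically. Gluing ever finer cycles through a chain
   recurrent point x puts x into the omega-limit set of the tracing orbit, and omega-limit points
   are non-wandering; hence CR(f) = Omega(f). Inside Omega(f) every point lies on arbitrarily fine
   cycles and can be reached back from any point close to its image, so every finite piece of a
   fine pseudo-orbit in Omega(f) closes up into a fine cycle. If finite shadowing failed in
   Omega(f), gluing such cycles would give a limit pseudo-orbit traced by no orbit. Compactness
   upgrades finite shadowing to shadowing, and the shadowing point is moved into Omega(f) by
   passing to an omega-limit point of a periodic tracer. Finally, shadowing a fine cycle through
   x in Omega(f) gives an orbit that returns periodically close to x; the closure of these returns
   contains a point of a minimal set, so Omega(f) lies in the closure of M(f), which in turn lies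
   in Omega(f). *)

section \<open>Pseudo-chains\<close>

definition pseudo_chain :: "('a::metric_space \<Rightarrow> 'a) \<Rightarrow> 'a set \<Rightarrow> real \<Rightarrow> nat \<Rightarrow> (nat \<Rightarrow> 'a) \<Rightarrow> bool" where
  "pseudo_chain f S \<delta> n c \<longleftrightarrow> (\<forall>i\<le>n. c i \<in> S) \<and> (\<forall>i<n. dist (f (c i)) (c (Suc i)) \<le> \<delta>)"

lemma chain_recurrent_set_iff:
  "x \<in> chain_recurrent_set f X \<longleftrightarrow>
     x \<in> X \<and> (\<forall>\<delta>>0. \<exists>n\<ge>1. \<exists>c. c 0 = x \<and> c n = x \<and> pseudo_chain f X \<delta> n c)"
  by (auto simp: chain_recurrent_set_def pseudo_chain_def)

lemma pseudo_chain_mono: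
  "pseudo_chain f S \<delta> n c \<Longrightarrow> S \<subseteq> T \<Longrightarrow> \<delta> \<le> \<delta>' \<Longrightarrow> pseudo_chain f T \<delta>' n c"
  unfolding pseudo_chain_def by (meson order_trans subsetD)

lemma pseudo_chain_prefix:
  "pseudo_orbit f S \<delta> xs \<Longrightarrow> pseudo_chain f S \<delta> n xs"
  by (simp add: pseudo_orbit_def pseudo_chain_def)

lemma pseudo_chain_append:
  assumes "pseudo_chain f S \<delta> m c" "pseudo_chain f S \<delta> n d" "c m = d 0"
  shows "pseudo_chain f S \<delta> (m + n) (\<lambda>i. if i \<le> m then c i else d (i - m))"
  unfolding pseudo_chain_def
proof (intro conjI allI impI)
  fix i assume "i < m + n"
  show "dist (f (if i \<le> m then c i else d (i - m))) (if Suc i \<le> m then c (Suc i) else d (Suc i - m)) \<le> \<delta>"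
  proof (cases "i < m")
    case True then show ?thesis using assms(1) by (auto simp: pseudo_chain_def)
  next
    case False
    then have "Suc i - m = Suc (i - m)" "i - m < n" using \<open>i < m + n\<close> by auto
    with False show ?thesis using assms by (auto simp: pseudo_chain_def)
  qed
qed (use assms in \<open>auto simp: pseudo_chain_def\<close>)

lemma pseudo_orbit_periodic:
  assumes "n \<ge> 1" "c n = c 0" "pseudo_chain f S \<delta> n c"
  shows "pseudo_orbit f S \<delta> (\<lambda>i. c (i mod n))"
  unfolding pseudo_orbit_def
proof (intro conjI allI)
  fix i
  have "i mod n < n" using assms(1) by simp
  moreover have "c (Suc i mod n) = c (Suc (i mod n))" using assms(2) by (simp add: mod_Suc)
  ultimately show "c (i mod n) \<in> S" "dist (f (c (i mod n))) (c (Suc i mod n)) \<le> \<delta>"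
    using assms(3) by (simp_all add: pseudo_chain_def)
qed

lemma sum_lessThan_ge_self: "(\<And>i. 1 \<le> L i) \<Longrightarrow> k \<le> (\<Sum>i<k. L i :: nat)"
  using sum_mono[of "{..<k}" "\<lambda>_. 1" L] by simp

lemma strict_mono_interval_index:
  fixes s :: "nat \<Rightarrow> nat"
  assumes s: "strict_mono s" "s 0 = 0"
  shows "\<exists>!k. s k \<le> i \<and> i < s (Suc k)"
proof -
  have "\<exists>k. s k \<le> i \<and> i < s (Suc k)"
  proof (induction i)
    case 0
    show ?case using s strict_monoD[OF s(1), of 0 1] by (intro exI[of _ 0]) simp
  next
    case (Suc i)
    then obtain k where k: "s k \<le> i" "i < s (Suc k)" by blast
    show ?case
    proof (cases "Suc i < s (Suc k)")
      case False
      then have "Suc i = s (Suc k)" using k by simp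
      then show ?thesis using strict_monoD[OF s(1), of "Suc k" "Suc (Suc k)"] by (intro exI[of _ "Suc k"]) simp
    qed (use k in \<open>intro exI[of _ k], simp\<close>)
  qed
  moreover have "\<not> k < k'" if "i < s (Suc k)" "s k' \<le> i" for k k'
  proof
    assume "k < k'"
    then have "s (Suc k) \<le> s k'" using strict_mono_less_eq[OF s(1)] by simp
    then show False using that by simp
  qed
  ultimately show ?thesis by (meson linorder_neqE_nat)
qed

lemma block_index:
  fixes L :: "nat \<Rightarrow> nat"
  assumes L: "\<And>k. L k \<ge> 1"
  obtains blk where "\<And>k j. j < L k \<Longrightarrow> blk ((\<Sum>l<k. L l) + j) = k"
    "\<And>i. (\<Sum>l<blk i. L l) \<le> i" "\<And>i. i < (\<Sum>l<blk i. L l) + L (blk i)"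
    "filterlim blk at_top sequentially"
proof -
  define s where "s k = (\<Sum>l<k. L l)" for k
  have s: "strict_mono s" "s 0 = 0"
    using L by (auto simp: strict_mono_Suc_iff s_def Suc_le_eq)
  define blk where "blk i = (THE k. s k \<le> i \<and> i < s (Suc k))" for i
  have blk: "s (blk i) \<le> i" "i < s (Suc (blk i))" for i
    using theI'[OF strict_mono_interval_index[OF s, of i]] by (simp_all add: blk_def)
  have "blk (s k + j) = k" if "j < L k" for k j
    unfolding blk_def by (rule the1_equality[OF strict_mono_interval_index[OF s]]) (use that in \<open>simp add: s_def\<close>)
  moreover have "K \<le> blk i" if "s K \<le> i" for K i
    using that blk(2)[of i] strict_mono_less[OF s(1), of K "Suc (blk i)"] by simp
  then have "filterlim blk at_top sequentially"
    by (auto simp: filterlim_at_top eventually_sequentially)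
  ultimately show ?thesis using blk by (intro that) (auto simp: s_def)
qed

lemma limit_pseudo_orbit_concat:
  fixes f :: "'a::metric_space \<Rightarrow> 'a"
  assumes L: "\<And>k. L k \<ge> 1" and B: "\<And>k. pseudo_chain f A (e k) (L k) (B k)"
    and link: "\<And>k. B k (L k) = B (Suc k) 0" and e: "e \<longlonglongrightarrow> 0"
  obtains Z where "limit_pseudo_orbit f A Z" "\<And>k j. j \<le> L k \<Longrightarrow> Z ((\<Sum>i<k. L i) + j) = B k j"
proof -
  define s where "s k = (\<Sum>i<k. L i)" for k
  obtain blk where blk_eq: "\<And>k j. j < L k \<Longrightarrow> blk (s k + j) = k"
    and in_block: "\<And>i. s (blk i) \<le> i" "\<And>i. i < s (blk i) + L (blk i)"
    and blk_lim: "filterlim blk at_top sequentially"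
    using block_index[of L, OF L] unfolding s_def by blast
  define Z where "Z i = B (blk i) (i - s (blk i))" for i
  have Z: "Z (s k + j) = B k j" if "j \<le> L k" for k j
  proof (cases "j < L k")
    case False
    then have "s k + j = s (Suc k) + 0" using that by (simp add: s_def)
    moreover have "0 < L (Suc k)" using L[of "Suc k"] by simp
    ultimately show ?thesis using blk_eq[of 0 "Suc k"] link[of k] \<open>j \<le> L k\<close> False
      by (simp add: Z_def)
  qed (simp add: Z_def blk_eq)
  have step: "dist (f (Z i)) (Z (Suc i)) \<le> e (blk i)" for i
  proof -
    have "Z i = B (blk i) (i - s (blk i))" "Z (Suc i) = B (blk i) (Suc (i - s (blk i)))"
      using Z[of "Suc (i - s (blk i))" "blk i"] in_block[of i] by (auto simp: Z_def)
    then show ?thesis using B[of "blk i"] in_block[of i] by (simp add: pseudo_chain_def less_diff_conv2)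
  qed
  have "(\<lambda>i. e (blk i)) \<longlonglongrightarrow> 0" using filterlim_compose[OF e blk_lim] .
  then have "(\<lambda>i. dist (f (Z i)) (Z (Suc i))) \<longlonglongrightarrow> 0"
    by (rule Lim_null_comparison[rotated]) (simp add: step always_eventually)
  moreover have "Z i \<in> A" for i
    using B[of "blk i"] in_block[of i] by (simp add: Z_def pseudo_chain_def)
  ultimately show ?thesis using that Z by (auto simp: limit_pseudo_orbit_def s_def)
qed

section \<open>Orbits, omega-limit sets and minimal sets\<close>

definition omega_limit_set :: "('a::metric_space \<Rightarrow> 'a) \<Rightarrow> 'a \<Rightarrow> 'a set" where
  "omega_limit_set f y = {z. \<forall>r>0. \<forall>N. \<exists>n\<ge>N. dist ((f ^^ n) y) z < r}"

lemma omega_limit_setI: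
  assumes "(\<lambda>m. (f ^^ t m) y) \<longlonglongrightarrow> z" "filterlim t at_top sequentially"
  shows "z \<in> omega_limit_set f y"
  unfolding omega_limit_set_def
proof (intro CollectI allI impI)
  fix r :: real and N assume "r > 0"
  then have "eventually (\<lambda>m. dist ((f ^^ t m) y) z < r) sequentially"
    using assms(1) by (rule tendstoD[rotated])
  moreover have "eventually (\<lambda>m. t m \<ge> N) sequentially"
    using assms(2) by (simp add: filterlim_at_top)
  ultimately have "eventually (\<lambda>m. dist ((f ^^ t m) y) z < r \<and> t m \<ge> N) sequentially"
    by (rule eventually_conj)
  then obtain M where "\<forall>m\<ge>M. dist ((f ^^ t m) y) z < r \<and> t m \<ge> N"
    by (auto simp: eventually_sequentially)
  then show "\<exists>n\<ge>N. dist ((f ^^ n) y) z < r" by blast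
qed

lemma funpow_in_invariant: "f ` S \<subseteq> S \<Longrightarrow> x \<in> S \<Longrightarrow> (f ^^ n) x \<in> S"
  by (induction n) auto

lemma orbit_invariant: "f ` {(f ^^ n) x | n. True} \<subseteq> {(f ^^ n) x | n. True}"
proof (rule image_subsetI)
  fix y assume "y \<in> {(f ^^ n) x | n. True}"
  then obtain n where "f y = (f ^^ Suc n) x" by auto
  then show "f y \<in> {(f ^^ n) x | n. True}" by blast
qed

lemma orbit_closure_eq_minimal_system:
  assumes M: "minimal_system f M" and cont: "continuous_on M f" and w: "w \<in> M"
  shows "orbit_closure f w = M"
proof -
  define A where "A = {(f ^^ n) w | n. True}"
  have "f ` M \<subseteq> M" "closed M" using M by (simp_all add: minimal_system_def)
  then have "A \<subseteq> M" using w funpow_in_invariant by (auto simp: A_def)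
  then have AM: "closure A \<subseteq> M" using \<open>closed M\<close> closure_minimal by blast
  have "f ` A \<subseteq> A" unfolding A_def using orbit_invariant .
  then have "f ` closure A \<subseteq> closure A"
    using image_closure_subset[of A f "closure A"] continuous_on_subset[OF cont AM] closure_subset
    by blast
  moreover have "closure A \<noteq> {}" by (auto simp: A_def)
  ultimately have "closure A = M"
    using M AM by (simp add: minimal_system_def)
  then show ?thesis by (simp add: orbit_closure_def A_def)
qed

lemma compact_Int_Inter_chain_nonempty:
  assumes S: "compact S" "S \<noteq> {}"
    and \<C>: "\<And>T. T \<in> \<C> \<Longrightarrow> closed T \<and> T \<noteq> {} \<and> T \<subseteq> S"
    and chain: "\<And>T U. T \<in> \<C> \<Longrightarrow> U \<in> \<C> \<Longrightarrow> T \<subseteq> U \<or> U \<subseteq> T"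
  shows "S \<inter> \<Inter>\<C> \<noteq> {}"
proof (rule compact_imp_fip[OF S(1)])
  show "closed T" if "T \<in> \<C>" for T using \<C>[OF that] by blast
  fix \<G> assume \<G>: "finite \<G>" "\<G> \<subseteq> \<C>"
  show "S \<inter> \<Inter>\<G> \<noteq> {}"
  proof (cases "\<G> = {}")
    case False
    have "subset.chain \<C> \<G>" using \<G>(2) chain by (auto simp: subset_chain_def)
    then have "\<Inter>\<G> \<in> \<G>" using Inter_in_chain[OF \<G>(1) False] by blast
    then have "\<Inter>\<G> \<noteq> {}" "\<Inter>\<G> \<subseteq> S" using \<C> \<G>(2) by blast+
    then show ?thesis by blast
  qed (use S(2) in simp)
qed

lemma minimal_system_exists:
  assumes S: "compact S" "S \<noteq> {}" "f ` S \<subseteq> S"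
  shows "\<exists>M\<subseteq>S. minimal_system f M"
proof -
  define \<F> where "\<F> = {Z. Z \<subseteq> S \<and> Z \<noteq> {} \<and> closed Z \<and> f ` Z \<subseteq> Z}"
  have "\<exists>M\<in>\<F>. \<forall>Z\<in>\<F>. Z \<subseteq> M \<longrightarrow> Z = M"
  proof (rule predicate_Zorn)
    show "partial_order_on \<F> (relation_of (\<lambda>M Z. Z \<subseteq> M) \<F>)"
      by (rule partial_order_on_relation_ofI) auto
  next
    fix \<C> assume "\<C> \<in> Chains (relation_of (\<lambda>M Z. Z \<subseteq> M) \<F>)"
    then have \<C>: "\<And>T. T \<in> \<C> \<Longrightarrow> T \<in> \<F>" and chain: "\<And>T U. T \<in> \<C> \<Longrightarrow> U \<in> \<C> \<Longrightarrow> T \<subseteq> U \<or> U \<subseteq> T"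
      by (auto simp: Chains_def relation_of_def)
    have "S \<inter> \<Inter>\<C> \<noteq> {}"
      using compact_Int_Inter_chain_nonempty[OF S(1,2) _ chain] \<C> by (auto simp: \<F>_def)
    moreover have "closed (S \<inter> \<Inter>\<C>)"
      using compact_imp_closed[OF S(1)] \<C> by (auto simp: \<F>_def)
    moreover have "f ` (S \<inter> \<Inter>\<C>) \<subseteq> S \<inter> \<Inter>\<C>"
      using S(3) \<C> by (fastforce simp: \<F>_def)
    ultimately show "\<exists>M\<in>\<F>. \<forall>T\<in>\<C>. M \<subseteq> T"
      by (intro bexI[of _ "S \<inter> \<Inter>\<C>"]) (auto simp: \<F>_def)
  qed
  then obtain M where "M \<in> \<F>" "\<And>Z. Z \<in> \<F> \<Longrightarrow> Z \<subseteq> M \<Longrightarrow> Z = M" by blast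
  then show ?thesis
    by (intro exI[of _ M]) (auto simp: \<F>_def minimal_system_def)
qed

lemma invariant_Union_funpow_images:
  assumes "(f ^^ L) ` K \<subseteq> K" "L \<ge> 1"
  shows "f ` (\<Union>j<L. (f ^^ j) ` K) \<subseteq> (\<Union>j<L. (f ^^ j) ` K)"
proof (rule image_subsetI)
  fix p assume "p \<in> (\<Union>j<L. (f ^^ j) ` K)"
  then obtain j k where jk: "j < L" "k \<in> K" "f p = (f ^^ Suc j) k" by auto
  show "f p \<in> (\<Union>j<L. (f ^^ j) ` K)"
  proof (cases "Suc j < L")
    case False
    then have "L = Suc j" using jk(1) by simp
    then have "f p \<in> K" using jk(2,3) assms(1) by auto
    then show ?thesis using assms(2) by (intro UN_I[of 0]) auto
  qed (use jk in blast)
qed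

section \<open>Compact dynamical systems\<close>

locale compact_dynamics =
  fixes f :: "'a::metric_space \<Rightarrow> 'a" and X :: "'a set"
  assumes compact_X: "compact X" and continuous_f: "continuous_on X f" and f_into: "f ` X \<subseteq> X"
begin

abbreviation "\<Omega> \<equiv> nonwandering_set f X"

lemma closed_X: "closed X"
  using compact_X by (rule compact_imp_closed)

lemma compact_closed_subset: "closed K \<Longrightarrow> K \<subseteq> X \<Longrightarrow> compact K"
  using compact_Int_closed[OF compact_X] by (metis inf.absorb2)

lemma funpow_in: "x \<in> X \<Longrightarrow> (f ^^ n) x \<in> X"
  using funpow_in_invariant[OF f_into] .

lemma continuous_on_funpow: "continuous_on X (f ^^ n)"
proof (induction n)
  case (Suc n)
  have "continuous_on X (f \<circ> (f ^^ n))"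
    by (rule continuous_on_compose[OF Suc]) (use continuous_f funpow_in continuous_on_subset in blast)
  then show ?case by simp
qed simp

lemma uniformly_continuous_f:
  assumes "\<epsilon> > 0"
  obtains r where "r > 0" "\<And>a b. a \<in> X \<Longrightarrow> b \<in> X \<Longrightarrow> dist a b < r \<Longrightarrow> dist (f a) (f b) < \<epsilon>"
  using compact_uniformly_continuous[OF continuous_f compact_X] assms
  unfolding uniformly_continuous_on_def by metis

lemma close_to_orbit_pseudo_chain:
  assumes "\<delta> > 0"
  obtains r where "r > 0"
    "\<And>S u n c. S \<subseteq> X \<Longrightarrow> u \<in> X \<Longrightarrow> (\<And>i. i \<le> n \<Longrightarrow> c i \<in> S \<and> dist (c i) ((f ^^ i) u) < r)
       \<Longrightarrow> pseudo_chain f S \<delta> n c"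
proof -
  obtain r0 where r0: "r0 > 0" "\<And>a b. a \<in> X \<Longrightarrow> b \<in> X \<Longrightarrow> dist a b < r0 \<Longrightarrow> dist (f a) (f b) < \<delta>/2"
    using uniformly_continuous_f[of "\<delta>/2"] assms by auto
  define r where "r = min r0 (\<delta>/2)"
  have "r > 0" using r0 assms by (simp add: r_def)
  moreover have "pseudo_chain f S \<delta> n c"
    if S: "S \<subseteq> X" and u: "u \<in> X" and c: "\<And>i. i \<le> n \<Longrightarrow> c i \<in> S \<and> dist (c i) ((f ^^ i) u) < r"
    for S u n c
    unfolding pseudo_chain_def
  proof (intro conjI allI impI)
    fix i assume "i < n"
    then have ci: "c i \<in> X" "dist (c i) ((f ^^ i) u) < r0"
      and ci': "dist (c (Suc i)) ((f ^^ Suc i) u) < \<delta>/2"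
      using c[of i] c[of "Suc i"] S by (auto simp: r_def)
    have "dist (f (c i)) ((f ^^ Suc i) u) < \<delta>/2"
      using r0(2)[OF ci(1) funpow_in[OF u] ci(2)] by simp
    then show "dist (f (c i)) (c (Suc i)) \<le> \<delta>"
      using ci' dist_triangle[of "f (c i)" "c (Suc i)" "(f ^^ Suc i) u"] dist_commute[of "c (Suc i)" "(f ^^ Suc i) u"] by linarith
  qed (use c in blast)
  ultimately show ?thesis using that by blast
qed

lemma nonwandering_set_iff:
  "z \<in> \<Omega> \<longleftrightarrow> z \<in> X \<and> (\<forall>r>0. \<exists>u\<in>X. \<exists>n>0. dist u z < r \<and> dist ((f ^^ n) u) z < r)"
proof (cases "z \<in> X")
  case zX: True
  have "(\<forall>U. openin (top_of_set X) U \<and> z \<in> U \<longrightarrow> (\<exists>n>0. (f ^^ n) ` U \<inter> U \<noteq> {}))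
    \<longleftrightarrow> (\<forall>r>0. \<exists>u\<in>X. \<exists>n>0. dist u z < r \<and> dist ((f ^^ n) u) z < r)"
  proof safe
    fix r :: real assume "r > 0"
      and nw: "\<forall>U. openin (top_of_set X) U \<and> z \<in> U \<longrightarrow> (\<exists>n>0. (f ^^ n) ` U \<inter> U \<noteq> {})"
    have "openin (top_of_set X) (X \<inter> ball z r)" "z \<in> X \<inter> ball z r"
      using zX \<open>r > 0\<close> by (auto simp: openin_open_Int)
    then obtain n where "n > 0" "(f ^^ n) ` (X \<inter> ball z r) \<inter> (X \<inter> ball z r) \<noteq> {}"
      using nw by blast
    then obtain u where "u \<in> X \<inter> ball z r" "(f ^^ n) u \<in> ball z r" by blast
    with \<open>n > 0\<close> show "\<exists>u\<in>X. \<exists>n>0. dist u z < r \<and> dist ((f ^^ n) u) z < r"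
      by (auto simp: dist_commute)
  next
    fix U assume ret: "\<forall>r>0. \<exists>u\<in>X. \<exists>n>0. dist u z < r \<and> dist ((f ^^ n) u) z < r"
      and U: "openin (top_of_set X) U" "z \<in> U"
    then obtain r where "r > 0" "ball z r \<inter> X \<subseteq> U"
      by (meson openin_contains_ball)
    moreover obtain u n where "u \<in> X" "n > 0" "dist u z < r" "dist ((f ^^ n) u) z < r"
      using ret \<open>r > 0\<close> by blast
    ultimately have "u \<in> U" "(f ^^ n) u \<in> U" "n > 0"
      using funpow_in by (auto simp: dist_commute)
    then show "\<exists>n>0. (f ^^ n) ` U \<inter> U \<noteq> {}" by blast
  qed
  then show ?thesis by (simp add: nonwandering_set_def zX)
qed (simp add: nonwandering_set_def)

lemma nonwandering_subset: "\<Omega> \<subseteq> X"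
  by (auto simp: nonwandering_set_def)

lemma nonwandering_subset_chain_recurrent: "\<Omega> \<subseteq> chain_recurrent_set f X"
proof
  fix x assume x: "x \<in> \<Omega>"
  have "\<exists>n\<ge>1. \<exists>c. c 0 = x \<and> c n = x \<and> pseudo_chain f X \<delta> n c" if \<delta>: "\<delta> > 0" for \<delta>
  proof -
    obtain r where r: "r > 0"
      "\<And>S u n c. S \<subseteq> X \<Longrightarrow> u \<in> X \<Longrightarrow> (\<And>i. i \<le> n \<Longrightarrow> c i \<in> S \<and> dist (c i) ((f ^^ i) u) < r)
         \<Longrightarrow> pseudo_chain f S \<delta> n c"
      using close_to_orbit_pseudo_chain[OF \<delta>] by blast
    obtain u n where u: "u \<in> X" "n > 0" "dist u x < r" "dist ((f ^^ n) u) x < r"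
      using x r(1) by (auto simp: nonwandering_set_iff)
    define c where "c i = (if i = 0 \<or> i = n then x else (f ^^ i) u)" for i
    have "pseudo_chain f X \<delta> n c"
      using x u nonwandering_subset funpow_in[OF u(1)] r(1)
      by (intro r(2)[OF order_refl u(1)]) (auto simp: c_def dist_commute)
    then show ?thesis using u(2) by (intro exI[of _ n] conjI exI[of _ c]) (auto simp: c_def)
  qed
  then show "x \<in> chain_recurrent_set f X"
    using x nonwandering_subset by (auto simp: chain_recurrent_set_iff)
qed

lemma closure_subset_nonwandering:
  assumes "S \<subseteq> \<Omega>" shows "closure S \<subseteq> \<Omega>"
proof
  fix x assume x: "x \<in> closure S"
  have "x \<in> X" using x assms nonwandering_subset closed_X closure_minimal by blast
  moreover have "\<exists>u\<in>X. \<exists>n>0. dist u x < r \<and> dist ((f ^^ n) u) x < r" if "r > 0" for r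
  proof -
    obtain s where "s \<in> S" "dist s x < r/2"
      using x \<open>r > 0\<close> closure_approachable half_gt_zero by blast
    moreover obtain u n where "u \<in> X" "n > 0" "dist u s < r/2" "dist ((f ^^ n) u) s < r/2"
      using assms \<open>s \<in> S\<close> \<open>r > 0\<close> by (meson half_gt_zero nonwandering_set_iff subsetD)
    ultimately show ?thesis
      using dist_triangle_half_r[of s u r x] dist_triangle_half_r[of s "(f ^^ n) u" r x]
      by (auto simp: dist_commute)
  qed
  ultimately show "x \<in> \<Omega>" by (simp add: nonwandering_set_iff)
qed

lemma compact_nonwandering: "compact \<Omega>"
proof -
  have "closure \<Omega> = \<Omega>"
    using closure_subset_nonwandering[of \<Omega>] closure_subset by blast
  then have "closed \<Omega>" by (metis closed_closure)
  then show ?thesis using nonwandering_subset by (rule compact_closed_subset)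
qed

lemma minimal_points_subset_nonwandering: "minimal_points f X \<subseteq> \<Omega>"
proof
  fix m assume "m \<in> minimal_points f X"
  then have m: "m \<in> X" "minimal_system f (orbit_closure f m)" by (auto simp: minimal_points_def)
  have "{(f ^^ n) m | n. True} \<subseteq> X" using m(1) funpow_in by auto
  then have "orbit_closure f m \<subseteq> X"
    unfolding orbit_closure_def using closed_X by (rule closure_minimal)
  then have cont: "continuous_on (orbit_closure f m) f"
    using continuous_f continuous_on_subset by blast
  have "m \<in> {(f ^^ n) m | n. True}" by (rule CollectI, rule exI[of _ 0]) simp
  moreover have "f m \<in> {(f ^^ n) m | n. True}" by (rule CollectI, rule exI[of _ 1]) simp
  ultimately have orb: "m \<in> orbit_closure f m" "f m \<in> orbit_closure f m"
    unfolding orbit_closure_def by (meson closure_subset subsetD)+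
  have "orbit_closure f (f m) = orbit_closure f m"
    using orbit_closure_eq_minimal_system[OF m(2) cont orb(2)] .
  then have "m \<in> closure {(f ^^ n) (f m) | n. True}"
    using orb(1) by (simp add: orbit_closure_def)
  then have "\<exists>n. dist ((f ^^ Suc n) m) m < r" if "r > 0" for r
    using that unfolding closure_approachable by (auto simp: funpow_Suc_right simp del: funpow.simps)
  then show "m \<in> \<Omega>"
    using m(1) unfolding nonwandering_set_iff by (metis dist_self zero_less_Suc)
qed

lemma omega_limit_subset: "y \<in> X \<Longrightarrow> omega_limit_set f y \<subseteq> X"
proof
  fix z assume "y \<in> X" "z \<in> omega_limit_set f y"
  then have "\<forall>e>0. \<exists>p\<in>X. dist p z < e"
    using funpow_in unfolding omega_limit_set_def by blast
  then show "z \<in> X" using closed_X closure_approachable closure_closed by metis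
qed

lemma omega_limit_subset_nonwandering:
  assumes y: "y \<in> X" shows "omega_limit_set f y \<subseteq> \<Omega>"
proof
  fix z assume z: "z \<in> omega_limit_set f y"
  have "\<exists>u\<in>X. \<exists>n>0. dist u z < r \<and> dist ((f ^^ n) u) z < r" if "r > 0" for r
  proof -
    obtain n1 where n1: "dist ((f ^^ n1) y) z < r" using z \<open>r > 0\<close> by (auto simp: omega_limit_set_def)
    obtain n2 where n2: "n2 \<ge> Suc n1" "dist ((f ^^ n2) y) z < r"
      using z \<open>r > 0\<close> by (auto simp: omega_limit_set_def)
    have "(f ^^ n2) y = (f ^^ (n2 - n1)) ((f ^^ n1) y)"
      using n2(1) by (metis funpow_add o_apply le_add_diff_inverse2 Suc_leD)
    then show ?thesis
      using n1 n2 funpow_in[OF y] by (intro bexI[of _ "(f ^^ n1) y"] exI[of _ "n2 - n1"]) auto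
  qed
  then show "z \<in> \<Omega>"
    using z omega_limit_subset[OF y] by (auto simp: nonwandering_set_iff)
qed

lemma omega_limit_attracts:
  assumes y: "y \<in> X" and "g > 0"
  shows "\<exists>N. \<forall>n\<ge>N. \<exists>w\<in>omega_limit_set f y. dist ((f ^^ n) y) w < g"
proof (rule ccontr)
  assume "\<not> ?thesis"
  then obtain h where h: "\<And>N. h N \<ge> N" "\<And>N w. w \<in> omega_limit_set f y \<Longrightarrow> dist ((f ^^ h N) y) w \<ge> g"
    by (metis not_less)
  obtain l r where "strict_mono r" "((\<lambda>N. (f ^^ h N) y) \<circ> r) \<longlonglongrightarrow> l"
    using seq_compactE[OF compact_imp_seq_compact[OF compact_X], of "\<lambda>N. (f ^^ h N) y"] funpow_in[OF y]
    by blast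
  then have lr: "strict_mono r" "(\<lambda>m. (f ^^ h (r m)) y) \<longlonglongrightarrow> l" by (simp_all add: o_def)
  have "m \<le> h (r m)" for m
    using h(1)[of "r m"] seq_suble[OF lr(1), of m] by linarith
  then have "filterlim (\<lambda>m. h (r m)) at_top sequentially"
    by (intro filterlim_at_top_mono[OF filterlim_ident] always_eventually) simp
  then have "l \<in> omega_limit_set f y" using lr(2) by (rule omega_limit_setI[rotated])
  moreover obtain m where "dist ((f ^^ h (r m)) y) l < g"
    using lr(2) \<open>g > 0\<close> unfolding lim_sequentially by blast
  ultimately show False using h(2) by (meson not_le)
qed

lemma omega_limit_cycle:
  assumes y: "y \<in> X" and x: "x \<in> omega_limit_set f y" and "\<delta> > 0"
  shows "\<exists>n\<ge>2. \<exists>c. c 0 = x \<and> c n = x \<and> pseudo_chain f (omega_limit_set f y) \<delta> n c"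
proof -
  obtain r where r: "r > 0"
    "\<And>S u n c. S \<subseteq> X \<Longrightarrow> u \<in> X \<Longrightarrow> (\<And>i. i \<le> n \<Longrightarrow> c i \<in> S \<and> dist (c i) ((f ^^ i) u) < r)
       \<Longrightarrow> pseudo_chain f S \<delta> n c"
    using close_to_orbit_pseudo_chain[OF \<open>\<delta> > 0\<close>] by blast
  obtain N where "\<forall>n\<ge>N. \<exists>w\<in>omega_limit_set f y. dist ((f ^^ n) y) w < r"
    using omega_limit_attracts[OF y r(1)] by blast
  then obtain w where w: "\<And>n. n \<ge> N \<Longrightarrow> w n \<in> omega_limit_set f y \<and> dist ((f ^^ n) y) (w n) < r"
    by metis
  obtain n1 where n1: "n1 \<ge> N" "dist ((f ^^ n1) y) x < r"
    using x r(1) by (auto simp: omega_limit_set_def)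
  obtain n2 where n2: "n2 \<ge> n1 + 2" "dist ((f ^^ n2) y) x < r"
    using x r(1) by (auto simp: omega_limit_set_def)
  define n where "n = n2 - n1"
  define c where "c i = (if i = 0 \<or> i = n then x else w (n1 + i))" for i
  have "pseudo_chain f (omega_limit_set f y) \<delta> n c"
  proof (rule r(2)[OF omega_limit_subset[OF y] funpow_in[OF y, of n1]])
    fix i assume "i \<le> n"
    have "(f ^^ i) ((f ^^ n1) y) = (f ^^ (n1 + i)) y" by (simp add: funpow_add add.commute)
    then show "c i \<in> omega_limit_set f y \<and> dist (c i) ((f ^^ i) ((f ^^ n1) y)) < r"
      using x n1 n2 w[of "n1 + i"] \<open>i \<le> n\<close> by (auto simp: c_def n_def dist_commute)
  qed
  then show ?thesis using n2 by (intro exI[of _ n] conjI exI[of _ c]) (auto simp: c_def n_def)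
qed

lemma shadowing_of_finite_shadowing:
  assumes K: "compact K" "K \<subseteq> X" and fin: "\<And>N. \<exists>w\<in>K. \<forall>j\<le>N. dist (xs j) ((f ^^ j) w) \<le> \<epsilon>"
  shows "\<exists>w\<in>K. \<forall>j. dist (xs j) ((f ^^ j) w) \<le> \<epsilon>"
proof -
  obtain w where w: "\<And>N. w N \<in> K" "\<And>N j. j \<le> N \<Longrightarrow> dist (xs j) ((f ^^ j) (w N)) \<le> \<epsilon>"
    using fin by metis
  obtain z r where "z \<in> K" "strict_mono r" "(w \<circ> r) \<longlonglongrightarrow> z"
    using seq_compactE[OF compact_imp_seq_compact[OF K(1)], of w] w(1) by blast
  then have z: "z \<in> K" "strict_mono r" and conv: "(\<lambda>m. w (r m)) \<longlonglongrightarrow> z"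
    by (simp_all add: o_def)
  have "dist (xs j) ((f ^^ j) z) \<le> \<epsilon>" for j
  proof (rule LIMSEQ_le_const2)
    show "(\<lambda>m. dist (xs j) ((f ^^ j) (w (r m)))) \<longlonglongrightarrow> dist (xs j) ((f ^^ j) z)"
      using w(1) z K(2)
      by (intro tendsto_dist tendsto_const continuous_on_tendsto_compose[OF continuous_on_funpow conv])
        (auto intro: always_eventually)
    have "dist (xs j) ((f ^^ j) (w (r m))) \<le> \<epsilon>" if "j \<le> m" for m
      using w(2) seq_suble[OF z(2), of m] that by simp
    then show "\<exists>N. \<forall>m\<ge>N. dist (xs j) ((f ^^ j) (w (r m))) \<le> \<epsilon>" by blast
  qed
  then show ?thesis using z(1) by blast
qed

lemma periodic_shadowing_in_nonwandering:
  assumes P: "P \<ge> 1" and periodic: "\<And>i. xs i = xs (i mod P)"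
    and w: "w \<in> X" "\<And>j. dist (xs j) ((f ^^ j) w) \<le> \<epsilon>"
  shows "\<exists>z\<in>\<Omega>. \<forall>j. dist (xs j) ((f ^^ j) z) \<le> \<epsilon>"
proof -
  obtain z r where "z \<in> X" "strict_mono r" "((\<lambda>m. (f ^^ (m * P)) w) \<circ> r) \<longlonglongrightarrow> z"
    using seq_compactE[OF compact_imp_seq_compact[OF compact_X], of "\<lambda>m. (f ^^ (m * P)) w"] funpow_in[OF w(1)]
    by blast
  then have z: "z \<in> X" "strict_mono r" and conv: "(\<lambda>m. (f ^^ (r m * P)) w) \<longlonglongrightarrow> z"
    by (simp_all add: o_def)
  have "m \<le> r m * P" for m using seq_suble[OF z(2), of m] P by (metis mult_le_mono2 mult.commute mult_1 order_trans)
  then have "filterlim (\<lambda>m. r m * P) at_top sequentially"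
    by (intro filterlim_at_top_mono[OF filterlim_ident] always_eventually) simp
  with conv have "z \<in> omega_limit_set f w" by (rule omega_limit_setI)
  then have "z \<in> \<Omega>" using omega_limit_subset_nonwandering[OF w(1)] by blast
  moreover have "dist (xs j) ((f ^^ j) z) \<le> \<epsilon>" for j
  proof (rule LIMSEQ_le_const2)
    show "(\<lambda>m. dist (xs j) ((f ^^ j) ((f ^^ (r m * P)) w))) \<longlonglongrightarrow> dist (xs j) ((f ^^ j) z)"
      using z(1) funpow_in[OF w(1)]
      by (intro tendsto_dist tendsto_const continuous_on_tendsto_compose[OF continuous_on_funpow conv])
        (auto intro: always_eventually)
    have "dist (xs j) ((f ^^ j) ((f ^^ (r m * P)) w)) \<le> \<epsilon>" for m
      using w(2)[of "j + r m * P"] periodic[of j] periodic[of "j + r m * P"]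
      by (simp add: funpow_add)
    then show "\<exists>N. \<forall>m\<ge>N. dist (xs j) ((f ^^ j) ((f ^^ (r m * P)) w)) \<le> \<epsilon>" by blast
  qed
  ultimately show ?thesis by blast
qed

lemma minimal_point_in_funpow_invariant:
  assumes K: "closed K" "K \<subseteq> X" "K \<noteq> {}" and L: "L \<ge> 1" "(f ^^ L) ` K \<subseteq> K"
  shows "\<exists>w\<in>K. w \<in> minimal_points f X"
proof -
  define S where "S = (\<Union>j<L. (f ^^ j) ` K)"
  have SX: "S \<subseteq> X" using K(2) funpow_in by (auto simp: S_def)
  have "compact S" unfolding S_def
    using compact_continuous_image[OF continuous_on_subset[OF continuous_on_funpow K(2)]]
      compact_closed_subset[OF K(1,2)] by auto
  moreover have "S \<noteq> {}" using K(3) L(1) by (auto simp: S_def intro!: exI[of _ 0])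
  moreover have "f ` S \<subseteq> S" unfolding S_def using L(2,1) by (rule invariant_Union_funpow_images)
  ultimately obtain M where M: "M \<subseteq> S" "minimal_system f M"
    using minimal_system_exists by blast
  then obtain z where "z \<in> M" by (auto simp: minimal_system_def)
  then obtain j k where jk: "j < L" "k \<in> K" "z = (f ^^ j) k" using M(1) by (auto simp: S_def)
  define w where "w = (f ^^ (L - j)) z"
  have "w = (f ^^ (L - j + j)) k" by (simp only: w_def jk(3) funpow_add o_apply)
  also have "\<dots> = (f ^^ L) k" using jk(1) by simp
  finally have "w \<in> K" using L(2) jk(2) by blast
  have "w \<in> M" using funpow_in_invariant[of f M] M(2) \<open>z \<in> M\<close> by (auto simp: w_def minimal_system_def)
  then have "orbit_closure f w = M"
    using orbit_closure_eq_minimal_system[OF M(2)] continuous_on_subset[OF continuous_f] M(1) SX by blast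
  then have "w \<in> minimal_points f X"
    using M(2) \<open>w \<in> K\<close> K(2) by (auto simp: minimal_points_def)
  then show ?thesis using \<open>w \<in> K\<close> by blast
qed

lemma minimal_point_in_return_closure:
  assumes y: "y \<in> X" and L: "L \<ge> 1"
  shows "\<exists>w\<in>minimal_points f X. w \<in> closure {(f ^^ (i * L)) y | i. True}"
proof -
  define R where "R = {(f ^^ (i * L)) y | i. True}"
  have "R \<subseteq> X" using funpow_in[OF y] by (auto simp: R_def)
  then have RX: "closure R \<subseteq> X" using closed_X by (rule closure_minimal)
  have "(f ^^ L) ` R \<subseteq> R"
  proof (rule image_subsetI)
    fix p assume "p \<in> R"
    then obtain i where "(f ^^ L) p = (f ^^ (Suc i * L)) y" by (auto simp: R_def funpow_add)
    then show "(f ^^ L) p \<in> R" unfolding R_def by blast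
  qed
  then have "(f ^^ L) ` closure R \<subseteq> closure R"
    using continuous_on_subset[OF continuous_on_funpow RX] closure_subset
    by (intro image_closure_subset[OF _ closed_closure]) auto
  moreover have "y \<in> R" by (auto simp: R_def intro: exI[of _ 0])
  then have "closure R \<noteq> {}" using closure_subset by blast
  ultimately show ?thesis
    using minimal_point_in_funpow_invariant[OF closed_closure RX _ L] by (auto simp: R_def)
qed

end

section \<open>Consequences of limit shadowing\<close>

locale limit_shadowing_dynamics = compact_dynamics +
  assumes limit_shadowing: "limit_shadowing_property f X"
begin

lemma shadowed_concatenation:
  assumes L: "\<And>k. L k \<ge> 1" and B: "\<And>k. pseudo_chain f X (e k) (L k) (B k)"
    and link: "\<And>k. B k (L k) = B (Suc k) 0" and e: "e \<longlonglongrightarrow> 0"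
  obtains y where "y \<in> X"
    "\<And>\<epsilon>. \<epsilon> > 0 \<Longrightarrow> \<exists>K. \<forall>k\<ge>K. \<forall>j\<le>L k. dist (B k j) ((f ^^ ((\<Sum>i<k. L i) + j)) y) < \<epsilon>"
proof -
  obtain Z where Z: "limit_pseudo_orbit f X Z" "\<And>k j. j \<le> L k \<Longrightarrow> Z ((\<Sum>i<k. L i) + j) = B k j"
    using limit_pseudo_orbit_concat[of L, OF L B link e] by blast
  obtain y where y: "y \<in> X" "(\<lambda>i. dist (Z i) ((f ^^ i) y)) \<longlonglongrightarrow> 0"
    using limit_shadowing Z(1) unfolding limit_shadowing_property_def by blast
  have "\<exists>K. \<forall>k\<ge>K. \<forall>j\<le>L k. dist (B k j) ((f ^^ ((\<Sum>i<k. L i) + j)) y) < \<epsilon>" if "\<epsilon> > 0" for \<epsilon>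
  proof -
    obtain K where K: "\<And>i. i \<ge> K \<Longrightarrow> dist (Z i) ((f ^^ i) y) < \<epsilon>"
      using y(2) \<open>\<epsilon> > 0\<close> unfolding lim_sequentially by auto
    have "K \<le> (\<Sum>i<k. L i) + j" if "K \<le> k" for k j
      using that sum_lessThan_ge_self[of L, OF L, of k] by linarith
    then show ?thesis using K Z(2) by metis
  qed
  with y(1) show ?thesis using that by blast
qed

lemma chain_recurrent_subset_omega_limit:
  assumes "x \<in> chain_recurrent_set f X"
  obtains y where "y \<in> X" "x \<in> omega_limit_set f y"
proof -
  have "\<forall>k. \<exists>n\<ge>1. \<exists>c. c 0 = x \<and> c n = x \<and> pseudo_chain f X (inverse (real (Suc k))) n c"
    using assms by (simp add: chain_recurrent_set_iff)
  then obtain L B where L: "\<And>k. L k \<ge> 1" and B: "\<And>k. B k 0 = x" "\<And>k. B k (L k) = x"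
    "\<And>k. pseudo_chain f X (inverse (real (Suc k))) (L k) (B k)"
    by metis
  obtain y where y: "y \<in> X"
    "\<And>\<epsilon>. \<epsilon> > 0 \<Longrightarrow> \<exists>K. \<forall>k\<ge>K. \<forall>j\<le>L k. dist (B k j) ((f ^^ ((\<Sum>i<k. L i) + j)) y) < \<epsilon>"
    using shadowed_concatenation[OF L B(3) _ LIMSEQ_inverse_real_of_nat] B(1,2) by metis
  have "x \<in> omega_limit_set f y"
    unfolding omega_limit_set_def
  proof (intro CollectI allI impI)
    fix r :: real and N assume "r > 0"
    then obtain K where "\<forall>k\<ge>K. dist x ((f ^^ (\<Sum>i<k. L i)) y) < r"
      using y(2) B(1) by fastforce
    moreover have "N \<le> (\<Sum>i<K + N. L i)" using sum_lessThan_ge_self[of L, OF L, of "K + N"] by simp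
    ultimately show "\<exists>n\<ge>N. dist ((f ^^ n) y) x < r" by (metis dist_commute le_add1)
  qed
  with y(1) show ?thesis using that by blast
qed

lemma chain_recurrent_subset_nonwandering: "chain_recurrent_set f X \<subseteq> \<Omega>"
  using chain_recurrent_subset_omega_limit omega_limit_subset_nonwandering by blast

lemma nonwandering_cycle:
  assumes "a \<in> \<Omega>" "\<delta> > 0"
  shows "\<exists>n\<ge>2. \<exists>c. c 0 = a \<and> c n = a \<and> pseudo_chain f \<Omega> \<delta> n c"
proof -
  obtain y where "y \<in> X" "a \<in> omega_limit_set f y"
    using chain_recurrent_subset_omega_limit assms(1) nonwandering_subset_chain_recurrent by blast
  then show ?thesis using omega_limit_cycle[OF _ _ assms(2)] omega_limit_subset_nonwandering
    by (meson order_refl pseudo_chain_mono)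
qed

lemma nonwandering_return_chain:
  assumes "\<eta> > 0"
  obtains \<delta> where "\<delta> > 0" "\<And>a b. a \<in> \<Omega> \<Longrightarrow> b \<in> \<Omega> \<Longrightarrow> dist (f a) b \<le> \<delta> \<Longrightarrow>
    \<exists>n\<ge>1. \<exists>c. c 0 = b \<and> c n = a \<and> pseudo_chain f \<Omega> \<eta> n c"
proof -
  obtain \<rho> where \<rho>: "\<rho> > 0" "\<And>a b. a \<in> X \<Longrightarrow> b \<in> X \<Longrightarrow> dist a b < \<rho> \<Longrightarrow> dist (f a) (f b) < \<eta>/2"
    using uniformly_continuous_f[of "\<eta>/2"] assms by auto
  have "\<exists>n\<ge>1. \<exists>c. c 0 = b \<and> c n = a \<and> pseudo_chain f \<Omega> \<eta> n c"
    if ab: "a \<in> \<Omega>" "b \<in> \<Omega>" "dist (f a) b \<le> \<rho>/3" for a b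
  proof -
    obtain n c where c: "n \<ge> 2" "c 0 = a" "c n = a" "pseudo_chain f \<Omega> (min (\<rho>/3) (\<eta>/2)) n c"
      using nonwandering_cycle[OF ab(1), of "min (\<rho>/3) (\<eta>/2)"] \<rho>(1) assms by auto
    then have c1: "c 1 \<in> \<Omega>" "dist (f a) (c 1) \<le> \<rho>/3" "dist (f (c 1)) (c 2) \<le> \<eta>/2"
      by (auto simp: pseudo_chain_def numeral_2_eq_2)
    \<comment> \<open>Replace \<open>a, c 1\<close> by \<open>b\<close>: as \<open>b\<close> is close to \<open>c 1\<close>, \<open>f b\<close> is close to \<open>c 2\<close>.\<close>
    define d where "d i = (if i = 0 then b else c (Suc i))" for i
    have "dist b (c 1) < \<rho>"
      using ab(3) c1(2) \<rho>(1) dist_triangle[of b "c 1" "f a"] by (simp add: dist_commute)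
    then have "dist (f b) (f (c 1)) < \<eta>/2"
      using \<rho>(2) ab(2) c1(1) nonwandering_subset by blast
    then have "dist (f (d 0)) (d 1) \<le> \<eta>"
      using c1(3) dist_triangle[of "f b" "c 2" "f (c 1)"] by (simp add: d_def numeral_2_eq_2)
    moreover have "dist (f (d i)) (d (Suc i)) \<le> \<eta>" if "0 < i" "i < n - 1" for i
    proof -
      have "dist (f (c (Suc i))) (c (Suc (Suc i))) \<le> min (\<rho>/3) (\<eta>/2)"
        using c(4) that by (simp add: pseudo_chain_def)
      then show ?thesis using that assms by (simp add: d_def)
    qed
    ultimately have "dist (f (d i)) (d (Suc i)) \<le> \<eta>" if "i < n - 1" for i
      using that by (cases "i = 0") auto
    then have "pseudo_chain f \<Omega> \<eta> (n - 1) d"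
      using c(4) ab(2) by (auto simp: pseudo_chain_def d_def)
    then show ?thesis
      using c by (intro exI[of _ "n - 1"] conjI exI[of _ d]) (auto simp: d_def)
  qed
  then show ?thesis using \<rho>(1) by (intro that[of "\<rho>/3"]) auto
qed

lemma pseudo_orbit_prefix_cycle:
  assumes "\<eta> > 0"
  obtains \<delta> where "\<delta> > 0" "\<And>xs N. pseudo_orbit f \<Omega> \<delta> xs \<Longrightarrow>
    \<exists>P>N. \<exists>c. (\<forall>j\<le>N. c j = xs j) \<and> c P = xs 0 \<and> pseudo_chain f \<Omega> \<eta> P c"
proof -
  obtain \<delta>0 where \<delta>0: "\<delta>0 > 0" "\<And>a b. a \<in> \<Omega> \<Longrightarrow> b \<in> \<Omega> \<Longrightarrow> dist (f a) b \<le> \<delta>0 \<Longrightarrow>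
    \<exists>n\<ge>1. \<exists>c. c 0 = b \<and> c n = a \<and> pseudo_chain f \<Omega> \<eta> n c"
    using nonwandering_return_chain[OF assms] by blast
  define \<delta> where "\<delta> = min \<delta>0 \<eta>"
  have "\<exists>P>N. \<exists>c. (\<forall>j\<le>N. c j = xs j) \<and> c P = xs 0 \<and> pseudo_chain f \<Omega> \<eta> P c"
    if xs: "pseudo_orbit f \<Omega> \<delta> xs" for xs N
  proof -
    have return_chain: "\<exists>n\<ge>1. \<exists>c. c 0 = xs k \<and> c n = xs 0 \<and> pseudo_chain f \<Omega> \<eta> n c" for k
    proof (induction k)
      case 0
      have "xs 0 \<in> \<Omega>" using xs by (simp add: pseudo_orbit_def)
      then obtain n c where "n \<ge> 2" "c 0 = xs 0" "c n = xs 0" "pseudo_chain f \<Omega> \<eta> n c"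
        using nonwandering_cycle[OF _ assms] by blast
      then show ?case by (intro exI[of _ n] conjI exI[of _ c]) auto
    next
      case (Suc k)
      then obtain n c where c: "n \<ge> 1" "c 0 = xs k" "c n = xs 0" "pseudo_chain f \<Omega> \<eta> n c"
        by blast
      have "xs k \<in> \<Omega>" "xs (Suc k) \<in> \<Omega>" "dist (f (xs k)) (xs (Suc k)) \<le> \<delta>0"
        using xs by (auto simp: pseudo_orbit_def \<delta>_def)
      then obtain m d where d: "m \<ge> 1" "d 0 = xs (Suc k)" "d m = xs k" "pseudo_chain f \<Omega> \<eta> m d"
        using \<delta>0(2) by blast
      show ?case
        using pseudo_chain_append[OF d(4) c(4)] c d
        by (intro exI[of _ "m + n"] conjI exI[of _ "\<lambda>i. if i \<le> m then d i else c (i - m)"]) auto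
    qed
    obtain n c where c: "n \<ge> 1" "c 0 = xs N" "c n = xs 0" "pseudo_chain f \<Omega> \<eta> n c"
      using return_chain by blast
    have "pseudo_chain f \<Omega> \<eta> N xs"
      using pseudo_chain_prefix[OF xs] by (rule pseudo_chain_mono) (auto simp: \<delta>_def)
    from pseudo_chain_append[OF this c(4)] show ?thesis
      using c by (intro exI[of _ "N + n"] conjI exI[of _ "\<lambda>i. if i \<le> N then xs i else c (i - N)"]) auto
  qed
  then show ?thesis using \<delta>0(1) assms by (intro that[of \<delta>]) (auto simp: \<delta>_def)
qed

lemma shadowed_cycles:
  assumes P: "\<And>k. P k \<ge> 1" and C: "\<And>k. C k (P k) = C k 0" "\<And>k. pseudo_chain f X (\<eta> k) (P k) (C k)"
    and \<eta>: "\<eta> \<longlonglongrightarrow> 0" and p: "(\<lambda>k. C k 0) \<longlonglongrightarrow> p"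
  obtains y where "y \<in> X"
    "\<And>\<epsilon>. \<epsilon> > 0 \<Longrightarrow> \<exists>K. \<forall>k\<ge>K. \<forall>j<P k. dist (C k j) ((f ^^ ((\<Sum>i<k. P i) + j)) y) < \<epsilon>"
proof -
  \<comment> \<open>The last point of each cycle is moved to the first point of the next one; since the
    base points converge, these jumps tend to zero.\<close>
  define B where "B k j = (if j = P k then C (Suc k) 0 else C k j)" for k j
  define e where "e k = \<eta> k + dist (C k 0) (C (Suc k) 0)" for k
  have B_chain: "pseudo_chain f X (e k) (P k) (B k)" for k
    unfolding pseudo_chain_def
  proof (intro conjI allI impI)
    fix j assume "j < P k"
    have "dist (f (C k j)) (C k (Suc j)) \<le> \<eta> k" "C k j \<in> X"
      using C(2)[of k] \<open>j < P k\<close> by (auto simp: pseudo_chain_def)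
    then show "dist (f (B k j)) (B k (Suc j)) \<le> e k"
      using dist_triangle[of "f (C k j)" "C (Suc k) 0" "C k 0"] C(1)[of k] \<open>j < P k\<close>
      by (cases "Suc j = P k") (auto simp: B_def e_def add_increasing2)
  qed (use C(2) in \<open>auto simp: B_def pseudo_chain_def\<close>)
  have link: "B k (P k) = B (Suc k) 0" for k
    using P[of "Suc k"] by (simp add: B_def)
  have "e \<longlonglongrightarrow> 0"
    unfolding e_def using tendsto_add[OF \<eta> tendsto_dist[OF p LIMSEQ_Suc[OF p]]] by simp
  then obtain y where y: "y \<in> X"
    "\<And>\<epsilon>. \<epsilon> > 0 \<Longrightarrow> \<exists>K. \<forall>k\<ge>K. \<forall>j\<le>P k. dist (B k j) ((f ^^ ((\<Sum>i<k. P i) + j)) y) < \<epsilon>"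
    using shadowed_concatenation[of P, OF P B_chain link] by blast
  show ?thesis
  proof (rule that[OF y(1)])
    fix \<epsilon> :: real assume "\<epsilon> > 0"
    then obtain K where K: "\<forall>k\<ge>K. \<forall>j\<le>P k. dist (B k j) ((f ^^ ((\<Sum>i<k. P i) + j)) y) < \<epsilon>"
      using y(2) by blast
    show "\<exists>K. \<forall>k\<ge>K. \<forall>j<P k. dist (C k j) ((f ^^ ((\<Sum>i<k. P i) + j)) y) < \<epsilon>"
    proof (intro exI[of _ K] allI impI)
      fix k j assume "K \<le> k" "j < P k"
      then show "dist (C k j) ((f ^^ ((\<Sum>i<k. P i) + j)) y) < \<epsilon>"
        using K[rule_format, of k j] by (simp add: B_def)
    qed
  qed
qed

lemma fine_cycle_shadowed:
  assumes P: "\<And>k. P k \<ge> 1" and c: "\<And>k. c k (P k) = c k 0" "\<And>k. pseudo_chain f X (\<eta> k) (P k) (c k)"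
    and \<eta>: "\<eta> \<longlonglongrightarrow> 0" and "\<epsilon> > 0"
  obtains k w where "w \<in> X" "\<And>j. j < P k \<Longrightarrow> dist (c k j) ((f ^^ j) w) < \<epsilon>"
proof -
  have "c k 0 \<in> X" for k using c(2)[of k] by (auto simp: pseudo_chain_def)
  then obtain p r where "p \<in> X" "strict_mono r" "((\<lambda>k. c k 0) \<circ> r) \<longlonglongrightarrow> p"
    using seq_compactE[OF compact_imp_seq_compact[OF compact_X], of "\<lambda>k. c k 0"] by blast
  then have r: "strict_mono r" "(\<lambda>k. c (r k) 0) \<longlonglongrightarrow> p" by (simp_all add: o_def)
  have "(\<lambda>k. \<eta> (r k)) \<longlonglongrightarrow> 0"
    using LIMSEQ_subseq_LIMSEQ[OF \<eta> r(1)] by (simp add: o_def)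
  then obtain y where y: "y \<in> X" "\<And>\<epsilon>. \<epsilon> > 0 \<Longrightarrow>
      \<exists>K. \<forall>k\<ge>K. \<forall>j<P (r k). dist (c (r k) j) ((f ^^ ((\<Sum>i<k. P (r i)) + j)) y) < \<epsilon>"
    using shadowed_cycles[of "\<lambda>k. P (r k)" "\<lambda>k. c (r k)" "\<lambda>k. \<eta> (r k)" p, OF P c _ r(2)] by blast
  then obtain K where K: "\<forall>j<P (r K). dist (c (r K) j) ((f ^^ ((\<Sum>i<K. P (r i)) + j)) y) < \<epsilon>"
    using \<open>\<epsilon> > 0\<close> by blast
  define w where "w = (f ^^ (\<Sum>i<K. P (r i))) y"
  have "(f ^^ j) w = (f ^^ ((\<Sum>i<K. P (r i)) + j)) y" for j
    by (simp only: w_def funpow_add o_apply add.commute)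
  then show ?thesis
    using that[of w "r K"] K funpow_in[OF y(1)] by (simp add: w_def)
qed

lemma nonwandering_finite_shadowing:
  assumes "\<epsilon> > 0"
  obtains \<delta> where "\<delta> > 0"
    "\<And>xs N. pseudo_orbit f \<Omega> \<delta> xs \<Longrightarrow> \<exists>w\<in>X. \<forall>j\<le>N. dist (xs j) ((f ^^ j) w) \<le> \<epsilon>"
proof -
  have "\<exists>\<delta>>0. \<forall>xs N. pseudo_orbit f \<Omega> \<delta> xs \<longrightarrow> (\<exists>w\<in>X. \<forall>j\<le>N. dist (xs j) ((f ^^ j) w) \<le> \<epsilon>)"
  proof (rule ccontr)
    assume no: "\<not> ?thesis"
    \<comment> \<open>Then for every \<open>k\<close> some badly shadowed prefix closes up into an \<open>\<eta> k\<close>-cycle in \<open>\<Omega>\<close>,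
      and gluing such cycles contradicts limit shadowing.\<close>
    define \<eta> where "\<eta> k = inverse (real (Suc k))" for k
    have "\<exists>xs N P c. (\<forall>w\<in>X. \<exists>j\<le>N. dist (xs j) ((f ^^ j) w) > \<epsilon>) \<and> P > N \<and>
        (\<forall>j\<le>N. c j = xs j) \<and> c P = c 0 \<and> pseudo_chain f \<Omega> (\<eta> k) P c" for k
    proof -
      obtain \<delta> where \<delta>: "\<delta> > 0" "\<And>xs N. pseudo_orbit f \<Omega> \<delta> xs \<Longrightarrow>
          \<exists>P>N. \<exists>c. (\<forall>j\<le>N. c j = xs j) \<and> c P = xs 0 \<and> pseudo_chain f \<Omega> (\<eta> k) P c"
        using pseudo_orbit_prefix_cycle[of "\<eta> k"] by (auto simp: \<eta>_def)
      obtain xs N where xs: "pseudo_orbit f \<Omega> \<delta> xs" "\<forall>w\<in>X. \<exists>j\<le>N. dist (xs j) ((f ^^ j) w) > \<epsilon>"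
        using no \<delta>(1) by (auto simp: not_le)
      obtain P c where "P > N" "\<forall>j\<le>N. c j = xs j" "c P = xs 0" "pseudo_chain f \<Omega> (\<eta> k) P c"
        using \<delta>(2)[OF xs(1)] by blast
      then show ?thesis using xs(2) by (intro exI[of _ xs] exI[of _ N] exI[of _ P] exI[of _ c]) auto
    qed
    then obtain xs N P c where bad: "\<And>k. \<forall>w\<in>X. \<exists>j\<le>N k. dist (xs k j) ((f ^^ j) w) > \<epsilon>"
      and P: "\<And>k. P k > N k" and prefix: "\<And>k j. j \<le> N k \<Longrightarrow> c k j = xs k j"
      and cycle: "\<And>k. c k (P k) = c k 0" "\<And>k. pseudo_chain f \<Omega> (\<eta> k) (P k) (c k)"
      by metis
    have "P k \<ge> 1" "pseudo_chain f X (\<eta> k) (P k) (c k)" for k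
      using P[of k] pseudo_chain_mono[OF cycle(2) nonwandering_subset order_refl] by auto
    moreover have "\<eta> \<longlonglongrightarrow> 0"
      using LIMSEQ_inverse_real_of_nat unfolding \<eta>_def[abs_def] .
    ultimately obtain k w where kw: "w \<in> X" "\<And>j. j < P k \<Longrightarrow> dist (c k j) ((f ^^ j) w) < \<epsilon>"
      using fine_cycle_shadowed[of P c \<eta>, OF _ cycle(1) _ _ \<open>\<epsilon> > 0\<close>] by blast
    have "dist (xs k j) ((f ^^ j) w) \<le> \<epsilon>" if "j \<le> N k" for j
    proof -
      have "j < P k" using that P[of k] by linarith
      then show ?thesis using kw(2)[of j] prefix[OF that] by simp
    qed
    then show False using bad[of k] kw(1) by (meson not_less)
  qed
  then show ?thesis using that by blast
qed

lemma shadowing_nonwandering: "shadowing_property f \<Omega>"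
  unfolding shadowing_property_def
proof (intro allI impI)
  fix \<epsilon> :: real assume "\<epsilon> > 0"
  obtain \<delta>0 where \<delta>0: "\<delta>0 > 0"
    "\<And>xs N. pseudo_orbit f \<Omega> \<delta>0 xs \<Longrightarrow> \<exists>w\<in>X. \<forall>j\<le>N. dist (xs j) ((f ^^ j) w) \<le> \<epsilon>"
    using nonwandering_finite_shadowing[OF \<open>\<epsilon> > 0\<close>] by blast
  obtain \<delta> where \<delta>: "\<delta> > 0" "\<And>xs N. pseudo_orbit f \<Omega> \<delta> xs \<Longrightarrow>
      \<exists>P>N. \<exists>c. (\<forall>j\<le>N. c j = xs j) \<and> c P = xs 0 \<and> pseudo_chain f \<Omega> \<delta>0 P c"
    using pseudo_orbit_prefix_cycle[OF \<delta>0(1)] by blast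
  have "\<exists>z\<in>\<Omega>. shadows f \<epsilon> xs z" if xs: "pseudo_orbit f \<Omega> \<delta> xs" for xs
  proof -
    \<comment> \<open>Each prefix of \<open>xs\<close> extends to a periodic \<open>\<delta>0\<close>-pseudo-orbit in \<open>\<Omega>\<close>, which is
      shadowed from a point of \<open>X\<close> and hence from one of its omega-limit points.\<close>
    have "\<exists>z\<in>\<Omega>. \<forall>j\<le>N. dist (xs j) ((f ^^ j) z) \<le> \<epsilon>" for N
    proof -
      obtain P c where c: "P > N" "\<forall>j\<le>N. c j = xs j" "c P = xs 0" "pseudo_chain f \<Omega> \<delta>0 P c"
        using \<delta>(2)[OF xs] by blast
      define ys where "ys i = c (i mod P)" for i
      have "pseudo_orbit f \<Omega> \<delta>0 ys"
        unfolding ys_def using c by (intro pseudo_orbit_periodic) auto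
      then obtain w where w: "w \<in> X" "\<forall>j. dist (ys j) ((f ^^ j) w) \<le> \<epsilon>"
        using shadowing_of_finite_shadowing[OF compact_X order_refl] \<delta>0(2) by blast
      have "ys i = ys (i mod P)" for i by (simp add: ys_def)
      then obtain z where "z \<in> \<Omega>" "\<forall>j. dist (ys j) ((f ^^ j) z) \<le> \<epsilon>"
        using periodic_shadowing_in_nonwandering[of P ys w \<epsilon>] c(1) w by auto
      moreover have "ys j = xs j" if "j \<le> N" for j using c(1,2) that by (simp add: ys_def)
      ultimately show ?thesis by (intro bexI[of _ z] allI impI) metis+
    qed
    then show ?thesis
      using shadowing_of_finite_shadowing[OF compact_nonwandering nonwandering_subset]
      by (simp add: shadows_def)
  qed
  then show "\<exists>\<delta>>0. \<forall>xs. pseudo_orbit f \<Omega> \<delta> xs \<longrightarrow> (\<exists>z\<in>\<Omega>. shadows f \<epsilon> xs z)"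
    using \<delta>(1) by blast
qed

lemma nonwandering_subset_closure_minimal: "\<Omega> \<subseteq> closure (minimal_points f X)"
proof
  fix x assume x: "x \<in> \<Omega>"
  have "\<exists>w\<in>minimal_points f X. dist w x < e" if "e > 0" for e
  proof -
    obtain \<delta> where \<delta>: "\<delta> > 0" "\<And>xs. pseudo_orbit f \<Omega> \<delta> xs \<Longrightarrow> \<exists>z\<in>\<Omega>. shadows f (e/2) xs z"
      using shadowing_nonwandering \<open>e > 0\<close> unfolding shadowing_property_def by (meson half_gt_zero)
    obtain n c where c: "n \<ge> 2" "c 0 = x" "c n = x" "pseudo_chain f \<Omega> \<delta> n c"
      using nonwandering_cycle[OF x \<delta>(1)] by blast
    have "pseudo_orbit f \<Omega> \<delta> (\<lambda>i. c (i mod n))"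
      using c by (intro pseudo_orbit_periodic) auto
    then obtain y where y: "y \<in> \<Omega>" "\<And>i. dist (c (i mod n)) ((f ^^ i) y) \<le> e/2"
      using \<delta>(2) by (auto simp: shadows_def)
    have "{(f ^^ (i * n)) y | i. True} \<subseteq> cball x (e/2)"
    proof
      fix p assume "p \<in> {(f ^^ (i * n)) y | i. True}"
      then obtain i where "p = (f ^^ (i * n)) y" by blast
      then show "p \<in> cball x (e/2)" using y(2)[of "i * n"] c(2) by simp
    qed
    then have "closure {(f ^^ (i * n)) y | i. True} \<subseteq> cball x (e/2)"
      by (simp add: closure_minimal)
    moreover obtain w where "w \<in> minimal_points f X" "w \<in> closure {(f ^^ (i * n)) y | i. True}"
      using minimal_point_in_return_closure[of y n] y(1) nonwandering_subset c(1) by auto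
    ultimately show ?thesis using \<open>e > 0\<close> by (force simp: dist_commute)
  qed
  then show "x \<in> closure (minimal_points f X)" by (simp add: closure_approachable)
qed

end

theorem theorem1p1:
  fixes f :: "'a::metric_space \<Rightarrow> 'a" and X :: "'a set"
  assumes "compact X"
    and "continuous_on X f"
    and "f ` X \<subseteq> X"
    and "limit_shadowing_property f X"
  shows "chain_recurrent_set f X = nonwandering_set f X
     \<and> nonwandering_set f X = closure (minimal_points f X)
     \<and> shadowing_property f (nonwandering_set f X)"
proof -
  interpret limit_shadowing_dynamics f X
    using assms by unfold_locales
  have "chain_recurrent_set f X = \<Omega>"
    using chain_recurrent_subset_nonwandering nonwandering_subset_chain_recurrent by (rule subset_antisym)
  moreover have "\<Omega> = closure (minimal_points f X)"
    using nonwandering_subset_closure_minimal closure_subset_nonwandering[OF minimal_points_subset_nonwandering]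
    by (rule subset_antisym)
  ultimately show ?thesis using shadowing_nonwandering by blast
qed

end
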